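(* Let $r\geq 2$ and $0<a<\frac{1}{r(r+1)}$. Let $X$ be a finite set of cardinality $n$ and let $A_1,\dots,A_{r+1}\subseteq X$ satisfy $$\sum_{i=1}^{r+1}|A_i|\geq\left(r-\frac1r-(r+1)a\right)n.$$ Then there exist $1\leq k<l\leq r+1$ with $$|A_k\cap A_l|\geq\left(\frac{r-2}{r}+\frac{2}{r^{2}(r+1)}-\frac{2(r-1)}{r}a\right)n.$$ *)

theory Defs
  imports Main Complex_Main
begin

end

theory Submission
  imports Defs
begin

text \<open>Let \<open>d x\<close> be the number of sets \<open>A i\<close> containing \<open>x\<close>. Double counting gives
  \<open>\<Sum>|A i| = \<Sum>x. d x\<close> and \<open>\<Sum>\<^sub>i\<^sub>\<noteq>\<^sub>j |A i \<inter> A j| = \<Sum>x. d x (d x - 1)\<close>. Since \<open>d x\<close> is an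
  integer, \<open>(d x - r) (d x - r + 1) \<ge> 0\<close>, i.e. \<open>d x (d x - 1) \<ge> 2 (r - 1) d x - r (r - 1)\<close>.
  Summing over \<open>x\<close> bounds the off-diagonal sum from below in terms of \<open>\<Sum>|A i|\<close>, and one of
  the \<open>r (r + 1)\<close> ordered pairs is at least the average.\<close>

lemma sum_card_eq_sum_card_containing:
  assumes "finite I" "finite X" "\<And>i. i \<in> I \<Longrightarrow> B i \<subseteq> X"
  shows "(\<Sum>i\<in>I. card (B i)) = (\<Sum>x\<in>X. card {i\<in>I. x \<in> B i})"
proof -
  have "(\<Sum>i\<in>I. card (B i)) = (\<Sum>i\<in>I. \<Sum>x\<in>X. of_bool (x \<in> B i))"
    using assms by (intro sum.cong refl) (simp add: Int_absorb1)
  also have "\<dots> = (\<Sum>x\<in>X. \<Sum>i\<in>I. of_bool (x \<in> B i))"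
    by (rule sum.swap)
  also have "\<dots> = (\<Sum>x\<in>X. card {i\<in>I. x \<in> B i})"
    using assms by (simp add: Int_def)
  finally show ?thesis .
qed

lemma sum_sum_card_Int_eq_sum_square:
  assumes "finite I" "finite X" "\<And>i. i \<in> I \<Longrightarrow> A i \<subseteq> X"
  shows "(\<Sum>i\<in>I. \<Sum>j\<in>I. card (A i \<inter> A j)) = (\<Sum>x\<in>X. (card {i\<in>I. x \<in> A i})\<^sup>2)"
proof -
  have "(\<Sum>i\<in>I. \<Sum>j\<in>I. card (A i \<inter> A j)) = (\<Sum>(i, j)\<in>I \<times> I. card (A i \<inter> A j))"
    by (rule sum.cartesian_product)
  also have "\<dots> = (\<Sum>x\<in>X. card {p\<in>I \<times> I. x \<in> A (fst p) \<inter> A (snd p)})"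
    using assms
    by (subst sum_card_eq_sum_card_containing[symmetric]) (auto simp: case_prod_beta, blast)
  also have "\<dots> = (\<Sum>x\<in>X. card ({i\<in>I. x \<in> A i} \<times> {i\<in>I. x \<in> A i}))"
    by (intro sum.cong refl arg_cong[where f = card]) auto
  finally show ?thesis
    by (simp add: card_cartesian_product power2_eq_square)
qed

lemma sum_offdiag_card_Int_eq:
  assumes "finite I" "finite X" "\<And>i. i \<in> I \<Longrightarrow> A i \<subseteq> X"
  shows "(\<Sum>i\<in>I. \<Sum>j\<in>I - {i}. card (A i \<inter> A j))
    = (\<Sum>x\<in>X. card {i\<in>I. x \<in> A i} * (card {i\<in>I. x \<in> A i} - 1))"
proof -
  have "(\<Sum>i\<in>I. \<Sum>j\<in>I. card (A i \<inter> A j))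
      = (\<Sum>i\<in>I. card (A i)) + (\<Sum>i\<in>I. \<Sum>j\<in>I - {i}. card (A i \<inter> A j))"
    using assms(1) by (simp add: sum.remove sum.distrib)
  moreover have "(\<Sum>x\<in>X. (card {i\<in>I. x \<in> A i})\<^sup>2)
      = (\<Sum>x\<in>X. card {i\<in>I. x \<in> A i})
        + (\<Sum>x\<in>X. card {i\<in>I. x \<in> A i} * (card {i\<in>I. x \<in> A i} - 1))"
    by (simp add: sum.distrib[symmetric] power2_eq_square algebra_simps)
  ultimately show ?thesis
    using sum_sum_card_Int_eq_sum_square[OF assms] sum_card_eq_sum_card_containing[OF assms]
    by simp
qed

lemma consecutive_product_lower_bound:
  fixes m r :: int
  shows "2 * (r - 1) * m - r * (r - 1) \<le> m * (m - 1)"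
proof -
  have "0 \<le> (m - r) * (m - r + 1)"
    by (cases "r \<le> m") (auto intro: mult_nonneg_nonneg mult_nonpos_nonpos)
  then show ?thesis
    by (simp add: algebra_simps)
qed

lemma sum_offdiag_card_Int_lower_bound:
  fixes r :: nat
  assumes "finite I" "finite X" "\<And>i. i \<in> I \<Longrightarrow> A i \<subseteq> X"
  shows "2 * (real r - 1) * (\<Sum>i\<in>I. real (card (A i))) - real r * (real r - 1) * real (card X)
    \<le> (\<Sum>i\<in>I. \<Sum>j\<in>I - {i}. real (card (A i \<inter> A j)))"
proof -
  define d where "d x = card {i\<in>I. x \<in> A i}" for x
  have "2 * (real r - 1) * (\<Sum>i\<in>I. real (card (A i))) - real r * (real r - 1) * real (card X)
      = (\<Sum>x\<in>X. 2 * (real r - 1) * real (d x) - real r * (real r - 1))"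
  proof -
    have "(\<Sum>i\<in>I. real (card (A i))) = (\<Sum>x\<in>X. real (d x))"
      using sum_card_eq_sum_card_containing[of I X A] assms by (simp add: d_def flip: of_nat_sum)
    then show ?thesis
      by (simp add: sum_subtractf sum_distrib_left)
  qed
  also have "\<dots> \<le> (\<Sum>x\<in>X. real (d x) * (real (d x) - 1))"
  proof (rule sum_mono)
    fix x
    have "real_of_int (2 * (int r - 1) * int (d x) - int r * (int r - 1))
        \<le> real_of_int (int (d x) * (int (d x) - 1))"
      by (simp only: of_int_le_iff consecutive_product_lower_bound)
    then show "2 * (real r - 1) * real (d x) - real r * (real r - 1) \<le> real (d x) * (real (d x) - 1)"
      by simp
  qed
  also have "\<dots> = real (\<Sum>x\<in>X. d x * (d x - 1))"
  proof -
    have real_pred_mult: "real (k * (k - 1)) = real k * (real k - 1)" for k :: nat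
      by (cases k) (simp_all add: algebra_simps)
    show ?thesis
      by (simp only: of_nat_sum real_pred_mult)
  qed
  also have "\<dots> = real (\<Sum>i\<in>I. \<Sum>j\<in>I - {i}. card (A i \<inter> A j))"
    using sum_offdiag_card_Int_eq[of I X A, OF assms] by (simp only: d_def)
  also have "\<dots> = (\<Sum>i\<in>I. \<Sum>j\<in>I - {i}. real (card (A i \<inter> A j)))"
    by (simp only: of_nat_sum)
  finally show ?thesis .
qed

lemma exists_offdiag_ge_average:
  fixes f :: "'i \<Rightarrow> 'i \<Rightarrow> real"
  assumes "finite I" "card I \<ge> 2"
  shows "\<exists>i\<in>I. \<exists>j\<in>I. i \<noteq> j
    \<and> (\<Sum>i\<in>I. \<Sum>j\<in>I - {i}. f i j) \<le> real (card I) * (real (card I) - 1) * f i j"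
proof (rule ccontr)
  define m where "m = card I"
  define T where "T = (\<Sum>i\<in>I. \<Sum>j\<in>I - {i}. f i j) / (real m * (real m - 1))"
  have m_pos: "real m * (real m - 1) > 0"
    using assms(2) unfolding m_def by simp
  assume "\<not> ?thesis"
  then have "f i j < T" if "i \<in> I" "j \<in> I" "i \<noteq> j" for i j
    using that m_pos unfolding T_def m_def by (force simp: pos_less_divide_eq not_le mult.commute)
  then have "(\<Sum>i\<in>I. \<Sum>j\<in>I - {i}. f i j) < (\<Sum>i\<in>I. real (card (I - {i})) * T)"
    using assms by (intro sum_strict_mono sum_bounded_above_strict) auto
  also have "\<dots> = real m * (real m - 1) * T"
    using assms by (simp add: m_def card_Diff_singleton)
  also have "\<dots> = (\<Sum>i\<in>I. \<Sum>j\<in>I - {i}. f i j)"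
    using assms(2) unfolding T_def m_def by simp
  finally show False ..
qed

lemma intersection_bound_identity:
  fixes x a N :: real
  assumes "x > 0"
  shows "x * (x + 1) * (((x - 2) / x + 2 / (x\<^sup>2 * (x + 1)) - 2 * (x - 1) / x * a) * N)
    = 2 * (x - 1) * ((x - 1 / x - (x + 1) * a) * N) - x * (x - 1) * N"
  using assms by (simp add: divide_simps power2_eq_square) algebra

theorem lemma4:
  fixes r n :: nat and a :: real and X :: "'x set" and A :: "nat \<Rightarrow> 'x set"
  assumes "r \<ge> 2"
    and "0 < a" and "a < 1 / (real r * (real r + 1))"
    and "finite X" and "card X = n"
    and "\<And>i. i \<in> {1..r+1} \<Longrightarrow> A i \<subseteq> X"
    and "(\<Sum>i=1..r+1. real (card (A i))) \<ge> (real r - 1 / real r - (real r + 1) * a) * real n"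
  shows "\<exists>k l. 1 \<le> k \<and> k < l \<and> l \<le> r + 1 \<and>
    real (card (A k \<inter> A l)) \<ge>
      ((real r - 2) / real r + 2 / ((real r)^2 * (real r + 1)) - 2 * (real r - 1) / real r * a) * real n"
proof -
  define I where "I = {1..r+1}"
  define t where "t = (real r - 2) / real r + 2 / ((real r)^2 * (real r + 1)) - 2 * (real r - 1) / real r * a"
  have card_I: "card I = r + 1"
    unfolding I_def by simp
  obtain i j where ij: "i \<in> I" "j \<in> I" "i \<noteq> j" and average:
      "(\<Sum>i\<in>I. \<Sum>j\<in>I - {i}. real (card (A i \<inter> A j)))
        \<le> real r * (real r + 1) * real (card (A i \<inter> A j))"
    using exists_offdiag_ge_average[of I "\<lambda>i j. real (card (A i \<inter> A j))"] assms(1) card_I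
    unfolding I_def by (force simp: algebra_simps)
  have "real r * (real r + 1) * (t * real n)
      = 2 * (real r - 1) * ((real r - 1 / real r - (real r + 1) * a) * real n)
        - real r * (real r - 1) * real n"
    unfolding t_def using assms(1) by (intro intersection_bound_identity) simp
  also have "\<dots> \<le> 2 * (real r - 1) * (\<Sum>i\<in>I. real (card (A i))) - real r * (real r - 1) * real n"
    using assms(1,7) unfolding I_def by (simp add: mult_left_mono)
  also have "\<dots> \<le> (\<Sum>i\<in>I. \<Sum>j\<in>I - {i}. real (card (A i \<inter> A j)))"
    using sum_offdiag_card_Int_lower_bound[of I X A r] assms(4-6) unfolding I_def by simp
  also note average
  finally have "t * real n \<le> real (card (A i \<inter> A j))"
    by (rule mult_left_le_imp_le) (use assms(1) in simp)
  then have "t * real n \<le> real (card (A (min i j) \<inter> A (max i j)))"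
    by (cases "i < j") (simp_all add: Int_commute)
  then show ?thesis
    using ij unfolding I_def t_def by (intro exI[of _ "min i j"] exI[of _ "max i j"]) auto
qed

end
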